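(* Let $S \subset \mathbb{Z}$ be a finite set, $n \ge 0$, $P \in \mathcal{P}_{2n}(S)$, $u \ge 0$ an integer, and let $R$ be a polynomial of degree at most $u$ with complex coefficients, $R \not\equiv 0$. Suppose $\mathrm{NC}(PR) \le \nu$. Let $v := \lfloor 16u\log\log(u+3)\rfloor$, $k := d_v$, and $H(z) := z^k - 1$. Then $$\mathrm{NC}(PH) \le (\nu+1)\big(k + |S|^{u+1} + 3(u+1) + 2\big),$$ where $|S|$ is the number of elements of $S$.
   Context: For $S \subset \mathbb{C}$ and $N\ge0$, $\mathcal{P}_N(S)$ denotes the set of polynomials $P(z)=\sum_{j=0}^N a_j z^j$ with every $a_j \in S$. For a polynomial $F(z)=\sum_j c_j z^j$, $\mathrm{NC}(F)$ is the number of indices $j$ with $c_j\ne0$. $d_v := \mathrm{LCM}(1,2,\dots,v)$ for $v\ge1$, and $d_0 := 1$. *)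

theory Defs
  imports Complex_Main "HOL-Computational_Algebra.Polynomial"
begin

definition polys_coeffs_in :: "nat \<Rightarrow> 'a::zero set \<Rightarrow> 'a poly set" where
  "polys_coeffs_in N S = {P. degree P \<le> N \<and> (\<forall>j\<le>N. coeff P j \<in> S)}"

definition NC :: "'a::zero poly \<Rightarrow> nat" where
  "NC F = card {j. coeff F j \<noteq> 0}"

text \<open>d_v = LCM(1,...,v), d_0 = 1.\<close>
definition dlcm :: "nat \<Rightarrow> nat" where
  "dlcm v = Lcm {1..v}"

end

theory Submission
  imports Defs "HOL-Computational_Algebra.Polynomial_Factorial" "HOL-Number_Theory.Totient"
    "HOL-Analysis.Harmonic_Numbers"
begin

text \<open>
  The coefficient of \<open>P H\<close> at \<open>j \<ge> k\<close> is \<open>coeff P (j - k) - coeff P j\<close>.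
  On a stretch of indices free of nonzero coefficients of \<open>P R\<close>, the coefficients of \<open>P\<close>, integers
  from \<open>S\<close>, satisfy the linear recurrence with characteristic polynomial \<open>R\<close>. If the stretch is longer
  than \<open>|S| ^ deg R + deg R + k\<close>, two windows of length \<open>deg R\<close> coincide, so the recurrence makes the
  stretch periodic, and a periodic integer solution of a recurrence of order \<open>e \<le> u\<close> has period \<open>k\<close>:
  its generating polynomial \<open>A\<close> vanishes at all but at most \<open>e\<close> roots of unity of the period, the
  exceptional roots are closed under Galois conjugation, so their orders \<open>m\<close> satisfy \<open>\<phi>(m) \<le> e\<close>,
  whence \<open>m\<close> divides \<open>d\<^sub>v\<close> since \<open>v \<ge> 2u\<close>. Hence every nonzero coefficient of \<open>P H\<close> lies in a
  window of length \<open>k + |S| ^ u + 2u + 1\<close> around one of the at most \<open>\<nu>\<close> nonzero coefficients of \<open>P R\<close>.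
\<close>

section \<open>Integer polynomials modulo a prime\<close>

lemma power_add_prime:
  fixes x y :: "'a::comm_ring_1"
  assumes "prime p"
  obtains M where "(x + y) ^ p = x ^ p + y ^ p + of_nat p * M"
proof -
  define f where "f k = of_nat (p choose k) * x ^ k * y ^ (p - k)" for k
  have middle: "f k = of_nat p * (of_nat ((p choose k) div p) * x ^ k * y ^ (p - k))"
    if "0 < k" "k < p" for k
  proof -
    have "p choose k = p * ((p choose k) div p)"
      using that assms by (intro dvd_mult_div_cancel[symmetric] dvd_choose_prime) auto
    then show ?thesis by (metis f_def mult.assoc of_nat_mult)
  qed
  have p1: "1 \<le> p" using prime_gt_0_nat[OF assms] by simp
  have "(x + y) ^ p = (\<Sum>k\<le>p. f k)"
    unfolding f_def by (rule binomial_ring)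
  also have "\<dots> = f 0 + f p + (\<Sum>k\<in>{1..<p}. f k)"
  proof -
    have "{..p} = insert 0 (insert p {1..<p})" using p1 by auto
    then show ?thesis using p1 by (simp add: add.assoc)
  qed
  also have "(\<Sum>k\<in>{1..<p}. f k)
      = of_nat p * (\<Sum>k\<in>{1..<p}. of_nat ((p choose k) div p) * x ^ k * y ^ (p - k))"
    by (simp add: middle sum_distrib_left)
  finally show ?thesis
    using that by (simp add: f_def add.commute)
qed

lemma prime_dvd_power_minus_self:
  fixes a :: int
  assumes "prime p"
  shows "int p dvd a ^ p - a"
proof -
  have p0: "p > 0" using assms prime_gt_0_nat by blast
  have nonneg: "int p dvd int n ^ p - int n" for n
  proof (induction n)
    case 0 then show ?case using p0 by (simp add: power_0_left)
  next
    case (Suc n)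
    obtain M where "(int n + 1) ^ p = int n ^ p + 1 ^ p + of_nat p * M"
      using power_add_prime[OF assms] .
    then have "int (Suc n) ^ p - int (Suc n) = (int n ^ p - int n) + int p * M"
      by (simp add: algebra_simps)
    then show ?case by (metis Suc.IH dvd_add dvd_triv_left)
  qed
  define b where "b = nat (a mod int p)"
  have "[a = int b] (mod int p)"
    using p0 by (simp add: b_def cong_def)
  then have "[a ^ p = int b ^ p] (mod int p)"
    by (rule cong_pow)
  also have "[int b ^ p = int b] (mod int p)"
    using nonneg by (simp add: cong_iff_dvd_diff)
  also have "[int b = a] (mod int p)"
    using p0 by (simp add: b_def cong_def)
  finally show ?thesis
    by (simp add: cong_iff_dvd_diff)
qed

lemma frobenius_int_poly:
  fixes g :: "int poly"
  assumes "prime l"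
  obtains E where "g ^ l = g \<circ>\<^sub>p monom 1 l + smult (int l) E"
proof -
  have "\<exists>E. g ^ l = g \<circ>\<^sub>p monom 1 l + smult (int l) E"
  proof (induction g rule: pCons_induct)
    case 0
    then show ?case using prime_gt_0_nat[OF assms] by (simp add: power_0_left)
  next
    case (pCons a g)
    obtain E where E: "g ^ l = g \<circ>\<^sub>p monom 1 l + smult (int l) E"
      using pCons.IH by blast
    obtain M where M: "([:a:] + monom 1 1 * g) ^ l = [:a:] ^ l + (monom 1 1 * g) ^ l + of_nat l * M"
      using power_add_prime[OF assms] .
    obtain t where t: "a ^ l = a + int l * t"
      using prime_dvd_power_minus_self[OF assms, of a] by (auto simp: dvd_def algebra_simps)
    have X: "pCons a g = [:a:] + monom 1 1 * g"
      by (simp add: poly_eq_iff coeff_pCons coeff_monom_mult split: nat.split)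
    have a: "[:a:] ^ l = [:a:] + smult (int l) [:t:]"
      using t by (simp add: poly_const_pow)
    have g: "(monom 1 1 * g) ^ l = monom 1 l * g ^ l"
      by (simp add: power_mult_distrib monom_power)
    have "pCons a g ^ l
        = [:a:] + smult (int l) [:t:] + monom 1 l * (g \<circ>\<^sub>p monom 1 l + smult (int l) E) + smult (int l) M"
      unfolding X M a g E by (simp add: of_nat_poly)
    also have "\<dots> = pCons a g \<circ>\<^sub>p monom 1 l + smult (int l) ([:t:] + monom 1 l * E + M)"
      by (simp add: pcompose_pCons algebra_simps smult_add_right)
    finally show ?case by blast
  qed
  then show ?thesis using that by blast
qed

lemma coeff_monic_mult_top_cong:
  fixes f T :: "int poly"
  assumes "lead_coeff f = 1" and "\<And>i. d < i \<Longrightarrow> l dvd coeff T i"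
  shows "[coeff (f * T) (degree f + d) = coeff T d] (mod l)"
proof -
  define n where "n = degree f + d"
  have "coeff (f * T) n = coeff T d + (\<Sum>i\<in>{..n} - {degree f}. coeff f i * coeff T (n - i))"
    using assms(1) by (simp add: coeff_mult n_def sum.remove[of _ "degree f"])
  moreover have "l dvd (\<Sum>i\<in>{..n} - {degree f}. coeff f i * coeff T (n - i))"
  proof (rule dvd_sum)
    fix i assume i: "i \<in> {..n} - {degree f}"
    show "l dvd coeff f i * coeff T (n - i)"
    proof (cases "i < degree f")
      case True
      then show ?thesis using assms(2)[of "n - i"] i by (simp add: n_def)
    next
      case False
      then show ?thesis using i by (simp add: coeff_eq_0)
    qed
  qed
  ultimately show ?thesis
    by (simp add: n_def cong_iff_dvd_diff)
qed

text \<open>Reduced modulo \<open>l\<close>, a monic polynomial of positive degree cannot divide a nonzero constant.\<close>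

lemma monic_mult_neq_const_plus_smult:
  fixes f T K :: "int poly"
  assumes monic: "lead_coeff f = 1" and deg: "degree f \<ge> 1" and "\<not> l dvd c"
  shows "f * T \<noteq> [:c:] + smult l K"
proof
  assume eq: "f * T = [:c:] + smult l K"
  show False
  proof (cases "\<forall>i. l dvd coeff T i")
    case True
    have "c = coeff f 0 * coeff T 0 - l * coeff K 0"
      using arg_cong[OF eq, of "\<lambda>p. coeff p 0"] by (simp add: coeff_mult_0)
    then have "l dvd c" using True by simp
    then show False using assms(3) by simp
  next
    case False
    define d where "d = (GREATEST i. \<not> l dvd coeff T i)"
    have bound: "i \<le> degree T" if "\<not> l dvd coeff T i" for i
      using that by (metis coeff_eq_0 dvd_0_right not_le_imp_less)
    obtain i0 where i0: "\<not> l dvd coeff T i0" using False by blast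
    have d: "\<not> l dvd coeff T d"
      unfolding d_def by (rule GreatestI_nat[of _ i0 "degree T"]) (use i0 bound in auto)
    have above: "l dvd coeff T i" if "d < i" for i
    proof (rule ccontr)
      assume "\<not> l dvd coeff T i"
      then have "i \<le> d" unfolding d_def by (rule Greatest_le_nat[of _ _ "degree T"]) (use bound in auto)
      then show False using that by simp
    qed
    have "[coeff (f * T) (degree f + d) = coeff T d] (mod l)"
      using monic above by (rule coeff_monic_mult_top_cong)
    moreover have "coeff (f * T) (degree f + d) = l * coeff K (degree f + d)"
      using eq deg by (simp add: coeff_pCons split: nat.split)
    ultimately have "l dvd coeff T d"
      by (metis cong_dvd_iff cong_sym dvd_triv_left)
    then show False using d by simp
  qed
qed

lemma power_add_eq_power_plus_mult:
  fixes x y :: "'a::comm_ring_1"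
  obtains W where "(x + y) ^ n = y ^ n + x * W"
proof -
  have "\<exists>W. (x + y) ^ n = y ^ n + x * W"
  proof (induction n)
    case 0
    show ?case by (rule exI[of _ 0]) simp
  next
    case (Suc n)
    then obtain W where "(x + y) ^ n = y ^ n + x * W" by blast
    then have "(x + y) ^ Suc n = y ^ Suc n + x * (y ^ n + (x + y) * W)"
      by (simp add: algebra_simps)
    then show ?case by blast
  qed
  then show ?thesis using that by blast
qed

text \<open>
  The identity \<open>X F' - m F = m\<close> for \<open>F = X ^ m - 1\<close> shows that \<open>F\<close> is squarefree modulo
  any prime \<open>l\<close> not dividing \<open>m\<close>, whereas a factor \<open>f\<close> of \<open>F = f g q\<close> dividing
  \<open>g(X ^ l) \<equiv> g ^ l\<close> would divide \<open>F\<close> twice modulo \<open>l\<close>.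
\<close>

lemma X_pow_minus_one_factor_not_dvd_pcompose:
  fixes f g q :: "int poly"
  assumes l: "prime l" and "\<not> l dvd m" and "0 < m"
    and F: "monom 1 m - 1 = f * (g * q)" and f: "lead_coeff f = 1" "degree f \<ge> 1"
  shows "\<not> f dvd g \<circ>\<^sub>p monom 1 l"
proof
  assume "f dvd g \<circ>\<^sub>p monom 1 l"
  then obtain s where s: "g \<circ>\<^sub>p monom 1 l = f * s" by blast
  obtain E where E: "g ^ l = g \<circ>\<^sub>p monom 1 l + smult (int l) E"
    using frobenius_int_poly[OF l] .
  define a where "a = monom 1 1 * pderiv (g * q) - smult (int m) (g * q)"
  define b where "b = monom 1 1 * pderiv f * q"
  have "monom 1 1 * pderiv (monom 1 m - 1) - smult (int m) (monom 1 m - 1) = [:int m:]"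
    using \<open>0 < m\<close> by (simp add: pderiv_diff pderiv_monom mult_monom smult_diff_right smult_monom monom_0)
  moreover have "monom 1 1 * pderiv (monom 1 m - 1) - smult (int m) (monom 1 m - 1) = f * a + g * b"
    unfolding F a_def b_def by (simp add: pderiv_mult algebra_simps)
  ultimately have bezout: "[:int m:] = f * a + g * b" by simp
  obtain W where W: "(f * a + g * b) ^ l = (g * b) ^ l + (f * a) * W"
    using power_add_eq_power_plus_mult .
  have "[:int m ^ l:] = (f * a + g * b) ^ l"
    by (simp add: poly_const_pow flip: bezout)
  also have "\<dots> = (g * b) ^ l + (f * a) * W"
    by (rule W)
  also have "\<dots> = f * (s * b ^ l + a * W) + smult (int l) (E * b ^ l)"
    by (simp add: power_mult_distrib E s algebra_simps)
  finally have "f * (s * b ^ l + a * W) = [:int m ^ l:] + smult (int l) (- (E * b ^ l))"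
    by simp
  moreover have "\<not> int l dvd int m ^ l"
    using l \<open>\<not> l dvd m\<close> by (metis of_nat_dvd_iff of_nat_power prime_dvd_power)
  ultimately show False
    using monic_mult_neq_const_plus_smult[OF f] by blast
qed

section \<open>Conjugate roots of unity\<close>

definition ipoly :: "int poly \<Rightarrow> 'a::comm_ring_1 \<Rightarrow> 'a" where
  "ipoly p x = poly (map_poly of_int p) x"

lemma ipoly_0 [simp]: "ipoly 0 x = 0"
  by (simp add: ipoly_def)

lemma ipoly_pCons [simp]: "ipoly (pCons a p) x = of_int a + x * ipoly p x"
  by (simp add: ipoly_def map_poly_pCons)

lemma ipoly_add [simp]: "ipoly (p + q) x = ipoly p x + ipoly q x"
proof -
  have "map_poly of_int (p + q) = map_poly of_int p + (map_poly of_int q :: 'a poly)"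
    by (simp add: poly_eq_iff coeff_map_poly)
  then show ?thesis by (simp add: ipoly_def)
qed

lemma ipoly_diff [simp]: "ipoly (p - q) x = ipoly p x - ipoly q x"
proof -
  have "map_poly of_int (p - q) = map_poly of_int p - (map_poly of_int q :: 'a poly)"
    by (simp add: poly_eq_iff coeff_map_poly)
  then show ?thesis by (simp add: ipoly_def)
qed

lemma ipoly_smult [simp]: "ipoly (smult c p) x = of_int c * ipoly p x"
  by (simp add: ipoly_def map_poly_smult)

lemma ipoly_mult [simp]: "ipoly (p * q) x = ipoly p x * ipoly q x"
proof -
  have "map_poly of_int (p * q) = map_poly of_int p * (map_poly of_int q :: 'a poly)"
    by (simp add: poly_eq_iff coeff_map_poly coeff_mult)
  then show ?thesis by (simp add: ipoly_def)
qed

lemma ipoly_1 [simp]: "ipoly 1 x = 1"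
  by (simp add: one_pCons)

lemma ipoly_monom [simp]: "ipoly (monom c n) x = of_int c * x ^ n"
  by (simp add: ipoly_def map_poly_monom poly_monom)

lemma ipoly_sum: "ipoly (sum f A) x = (\<Sum>i\<in>A. ipoly (f i) x)"
  by (induction A rule: infinite_finite_induct) simp_all

lemma ipoly_pcompose: "ipoly (g \<circ>\<^sub>p q) x = ipoly g (ipoly q x)"
  by (induction g) (simp_all add: pcompose_pCons)

definition primitive_root_of_unity :: "'a::monoid_mult \<Rightarrow> nat \<Rightarrow> bool" where
  "primitive_root_of_unity z m \<longleftrightarrow> 0 < m \<and> (\<forall>j. z ^ j = 1 \<longleftrightarrow> m dvd j)"

lemma primitive_root_of_unity_power:
  assumes "primitive_root_of_unity z m" and "coprime c m"
  shows "primitive_root_of_unity (z ^ c) m"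
proof -
  have "m dvd c * j \<longleftrightarrow> m dvd j" for j
    using assms(2) by (simp add: coprime_commute coprime_dvd_mult_right_iff)
  then show ?thesis
    using assms(1) by (simp add: primitive_root_of_unity_def flip: power_mult)
qed

lemma power_div_mod_eq:
  fixes z :: "'a::monoid_mult"
  shows "z ^ a = (z ^ m) ^ (a div m) * z ^ (a mod m)"
proof -
  have "z ^ a = z ^ (m * (a div m) + a mod m)"
    by simp
  then show ?thesis
    by (simp only: power_add power_mult)
qed

lemma power_mod_primitive_root_of_unity:
  assumes "primitive_root_of_unity z m"
  shows "z ^ (a mod m) = z ^ a"
proof -
  have "z ^ a = (z ^ m) ^ (a div m) * z ^ (a mod m)"
    by (rule power_div_mod_eq)
  also have "z ^ m = 1"
    using assms by (simp add: primitive_root_of_unity_def)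
  finally show ?thesis by simp
qed

lemma primitive_root_of_unity_exists:
  fixes z :: "'a::monoid_mult"
  assumes "z ^ p = 1" and "0 < p"
  obtains m where "primitive_root_of_unity z m"
proof -
  define m where "m = (LEAST j. 0 < j \<and> z ^ j = 1)"
  have m: "0 < m \<and> z ^ m = 1"
    unfolding m_def by (rule LeastI[of _ p]) (use assms in auto)
  have "z ^ j = 1 \<longleftrightarrow> m dvd j" for j
  proof
    assume "z ^ j = 1"
    moreover have "z ^ j = (z ^ m) ^ (j div m) * z ^ (j mod m)"
      by (rule power_div_mod_eq)
    ultimately have "z ^ (j mod m) = 1" using m by simp
    then have "\<not> j mod m < m" if "0 < j mod m"
      using that unfolding m_def by (metis (mono_tags, lifting) not_less_Least)
    then show "m dvd j" using m by (meson mod_less_divisor mod_0_imp_dvd not_gr0)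
  next
    assume "m dvd j"
    then show "z ^ j = 1" using m by (auto simp: power_mult)
  qed
  then show ?thesis using m that unfolding primitive_root_of_unity_def by blast
qed

lemma minimal_int_poly_exists:
  fixes w :: "'a::{idom,ring_char_0}"
  assumes "F \<noteq> 0" and "ipoly F w = 0"
  obtains f where "content f = 1" and "ipoly f w = 0" and "\<And>h. ipoly h w = 0 \<Longrightarrow> f dvd h"
proof -
  define d where "d = (LEAST n. \<exists>p. p \<noteq> 0 \<and> ipoly p w = 0 \<and> degree p = n)"
  have "\<exists>p. p \<noteq> 0 \<and> ipoly p w = 0 \<and> degree p = d"
    unfolding d_def by (rule LeastI_ex) (use assms in blast)
  then obtain f0 where f0: "f0 \<noteq> 0" "ipoly f0 w = 0" "degree f0 = d"
    by blast
  have minimal: "d \<le> degree p" if "p \<noteq> 0" "ipoly p w = 0" for p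
    unfolding d_def by (rule Least_le) (use that in blast)
  define f where "f = primitive_part f0"
  have f: "f \<noteq> 0" "content f = 1" "degree f = d"
    using f0 by (simp_all add: f_def)
  have "ipoly f0 w = of_int (content f0) * ipoly f w"
    by (metis content_times_primitive_part ipoly_smult f_def)
  then have fw: "ipoly f w = 0" using f0 by simp
  have "f dvd h" if hw: "ipoly h w = 0" for h
  proof -
    obtain q r where qr: "pseudo_divmod h f = (q, r)" by fastforce
    define c where "c = lead_coeff f ^ (Suc (degree h) - degree f)"
    have eq: "smult c h = f * q + r" and r: "r = 0 \<or> degree r < degree f"
      using pseudo_divmod[OF f(1) qr] by (simp_all add: c_def)
    have "ipoly r w = 0"
      using arg_cong[OF eq, of "\<lambda>p. ipoly p w"] hw fw by simp
    then have "r = 0" using r minimal[of r] f(3) by linarith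
    then have "f dvd smult c h" using eq by simp
    then have "fract_poly f dvd smult (to_fract c) (fract_poly h)"
      by (metis fract_poly_dvd fract_poly_smult)
    moreover have "c \<noteq> 0" using f(1) by (simp add: c_def)
    ultimately have "fract_poly f dvd fract_poly h"
      by (metis dvd_smult_cancel to_fract_eq_0_iff)
    then show ?thesis using f(2) by (rule fract_poly_dvdD)
  qed
  then show ?thesis by (rule that[OF f(2) fw])
qed

lemma monic_minimal_poly_primitive_root_of_unity:
  fixes w :: "'a::{idom,ring_char_0}"
  assumes "primitive_root_of_unity w m"
  obtains f where "lead_coeff f = 1" and "degree f \<ge> 1" and "ipoly f w = 0"
    and "\<And>h. ipoly h w = 0 \<Longrightarrow> f dvd h"
proof -
  define F :: "int poly" where "F = monom 1 m - 1"
  have m: "0 < m" "w ^ m = 1"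
    using assms by (auto simp: primitive_root_of_unity_def)
  have "degree F = m"
    unfolding F_def diff_conv_add_uminus
    by (subst degree_add_eq_left) (use m(1) in \<open>simp_all add: degree_monom_eq\<close>)
  then have "lead_coeff F = 1"
    using m(1) by (simp add: F_def)
  then have "F \<noteq> 0" by auto
  have "ipoly F w = 0"
    using m by (simp add: F_def)
  obtain f1 where f1: "content f1 = 1" "ipoly f1 w = 0" "\<And>h. ipoly h w = 0 \<Longrightarrow> f1 dvd h"
    using minimal_int_poly_exists[OF \<open>F \<noteq> 0\<close> \<open>ipoly F w = 0\<close>] by blast
  obtain g where "F = f1 * g" using f1(3) \<open>ipoly F w = 0\<close> by blast
  then have "lead_coeff f1 * lead_coeff g = 1"
    using \<open>lead_coeff F = 1\<close> by (simp add: lead_coeff_mult)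
  then have unit: "lead_coeff f1 * lead_coeff f1 = 1"
    by (auto simp: zmult_eq_1_iff)
  have "f1 \<noteq> 0" using f1(1) by auto
  define f where "f = smult (lead_coeff f1) f1"
  have lead: "lead_coeff f = 1" using unit \<open>f1 \<noteq> 0\<close> by (simp add: f_def)
  have fw: "ipoly f w = 0" using f1(2) by (simp add: f_def)
  have "smult (lead_coeff f1) f = f1"
    using unit by (simp add: f_def)
  then have "f dvd f1"
    using dvd_smult[OF dvd_refl, of f "lead_coeff f1"] by (simp only:)
  then have dvd: "f dvd h" if "ipoly h w = 0" for h
    using f1(3)[OF that] by (rule dvd_trans)
  have "degree f \<ge> 1"
  proof (rule ccontr)
    assume "\<not> degree f \<ge> 1"
    then have "degree f = 0" by simp
    then have "[:coeff f 0:] = f" by (rule degree_0_id)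
    then have "f = 1" using lead \<open>degree f = 0\<close> by (simp add: one_pCons)
    then show False using fw by simp
  qed
  then show ?thesis using that[OF lead _ fw dvd] by blast
qed

lemma ipoly_root_power_prime:
  fixes w :: "'a::{idom,ring_char_0}"
  assumes l: "prime l" and "\<not> l dvd m" and w: "primitive_root_of_unity w m"
    and A: "ipoly A w = 0"
  shows "ipoly A (w ^ l) = 0"
proof -
  have m: "0 < m" "w ^ m = 1" using w by (auto simp: primitive_root_of_unity_def)
  obtain f where f: "lead_coeff f = 1" "degree f \<ge> 1" "ipoly f w = 0"
    and f_dvd: "\<And>h. ipoly h w = 0 \<Longrightarrow> f dvd h"
    using monic_minimal_poly_primitive_root_of_unity[OF w] by blast
  have "ipoly f (w ^ l) = 0"
  proof (rule ccontr)
    assume nonzero: "ipoly f (w ^ l) \<noteq> 0"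
    have "coprime l m" using l \<open>\<not> l dvd m\<close> by (simp add: prime_imp_coprime)
    then obtain g where g: "ipoly g (w ^ l) = 0" and g_dvd: "\<And>h. ipoly h (w ^ l) = 0 \<Longrightarrow> g dvd h"
      using monic_minimal_poly_primitive_root_of_unity[OF primitive_root_of_unity_power[OF w]] by blast
    have F_root: "ipoly (monom 1 m - 1) z = 0" if "z ^ m = 1" for z :: 'a
      using that by simp
    obtain q1 where q1: "monom 1 m - 1 = f * q1" using f_dvd[OF F_root[OF m(2)]] by blast
    have "(w ^ l) ^ m = 1" using m(2) by (metis power_mult power_mult_distrib power_one mult.commute)
    then have "ipoly f (w ^ l) * ipoly q1 (w ^ l) = 0"
      using F_root by (simp flip: ipoly_mult q1)
    then obtain q2 where "q1 = g * q2" using nonzero g_dvd by auto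
    then have "\<not> f dvd g \<circ>\<^sub>p monom 1 l"
      using X_pow_minus_one_factor_not_dvd_pcompose[OF l \<open>\<not> l dvd m\<close> m(1) _ f(1,2)] q1 by blast
    moreover have "ipoly (g \<circ>\<^sub>p monom 1 l) w = 0"
      using g by (simp add: ipoly_pcompose)
    ultimately show False using f_dvd by blast
  qed
  moreover obtain q where "A = f * q" using f_dvd[OF A] by blast
  ultimately show ?thesis by simp
qed

lemma ipoly_root_power_coprime:
  fixes w :: "'a::{idom,ring_char_0}"
  assumes w: "primitive_root_of_unity w m" and A: "ipoly A w = 0"
  shows "coprime b m \<Longrightarrow> ipoly A (w ^ b) = 0"
proof (induction b rule: less_induct)
  case (less b)
  consider "b = 0" | "b = 1" | l c where "prime l" "b = l * c" "c < b"
  proof (cases "b \<le> 1")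
    case False
    then obtain l where "prime l" "l dvd b" using prime_factor_nat[of b] by auto
    then obtain c where "b = l * c" by (elim dvdE)
    moreover have "c \<noteq> 0" using False \<open>b = l * c\<close> by (cases c) simp_all
    then have "c < b"
      using prime_gt_1_nat[OF \<open>prime l\<close>] by (simp add: \<open>b = l * c\<close>)
    ultimately show ?thesis using that(3) \<open>prime l\<close> by blast
  qed (use that in linarith)
  then show ?case
  proof cases
    case 1
    then have "m = 1" using less.prems by simp
    have "w ^ 1 = 1 \<longleftrightarrow> m dvd 1"
      using w unfolding primitive_root_of_unity_def by (elim conjE spec)
    then have "w = 1" using \<open>m = 1\<close> by simp
    then show ?thesis using A by simp
  next
    case 2
    then show ?thesis using A by simp
  next
    case (3 l c)
    then have "coprime c m" "coprime l m" using less.prems by simp_all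
    then have "\<not> l dvd m"
      using \<open>prime l\<close> by (metis coprime_absorb_left not_prime_unit)
    have "ipoly A ((w ^ c) ^ l) = 0"
      by (rule ipoly_root_power_prime[OF \<open>prime l\<close> \<open>\<not> l dvd m\<close>
            primitive_root_of_unity_power[OF w \<open>coprime c m\<close>] less.IH[OF \<open>c < b\<close> \<open>coprime c m\<close>]])
    then show ?thesis by (simp add: 3 power_mult mult.commute)
  qed
qed

lemma ipoly_root_power_coprime_iff:
  fixes w :: "'a::{idom,ring_char_0}"
  assumes w: "primitive_root_of_unity w m" and "coprime b m"
  shows "ipoly A (w ^ b) = 0 \<longleftrightarrow> ipoly A w = 0"
proof
  assume A: "ipoly A (w ^ b) = 0"
  obtain b' where b': "[b * b' = 1] (mod m)"
    using cong_solve_coprime_nat[OF \<open>coprime b m\<close>] by auto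
  then have "coprime b' m"
    by (metis coprime_1_left coprime_mult_left_iff cong_imp_coprime cong_sym)
  have "(w ^ b) ^ b' = w ^ ((b * b') mod m)"
    by (simp add: power_mult power_mod_primitive_root_of_unity[OF w])
  also have "\<dots> = w ^ (1 mod m)"
    using b' by (simp add: cong_def)
  also have "\<dots> = w"
    using power_mod_primitive_root_of_unity[OF w, of 1] by simp
  finally show "ipoly A w = 0"
    using ipoly_root_power_coprime[OF primitive_root_of_unity_power[OF w \<open>coprime b m\<close>] A \<open>coprime b' m\<close>]
    by simp
qed (rule ipoly_root_power_coprime[OF w _ \<open>coprime b m\<close>])

lemma totient_le_card_nonroots:
  fixes z :: complex
  assumes z: "primitive_root_of_unity z m" and "ipoly A z \<noteq> 0"
  shows "totient m \<le> card {w::complex. w ^ m = 1 \<and> ipoly A w \<noteq> 0}"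
proof -
  have m: "0 < m" "z ^ m = 1" using z by (auto simp: primitive_root_of_unity_def)
  then have "z \<noteq> 0" by (cases "z = 0") (auto simp: power_0_left)
  have eq: "a = b" if "a \<le> b" "a \<in> totatives m" "b \<in> totatives m" "z ^ a = z ^ b" for a b
  proof -
    have "z ^ b = z ^ a * z ^ (b - a)"
      using that(1) by (simp flip: power_add)
    then have "z ^ a * z ^ (b - a) = z ^ a * 1"
      using that(4) by simp
    then have "m dvd b - a"
      using z \<open>z \<noteq> 0\<close> by (simp add: primitive_root_of_unity_def)
    moreover have "b - a < m" using that(2,3) by (auto simp: totatives_def)
    ultimately have "b - a = 0" by (metis dvd_imp_le neq0_conv not_le)
    then show "a = b" using that(1) by simp
  qed
  have "inj_on (\<lambda>b. z ^ b) (totatives m)"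
  proof (rule inj_onI)
    fix a b assume "a \<in> totatives m" "b \<in> totatives m" "z ^ a = z ^ b"
    then show "a = b" using eq[of a b] eq[of b a] by (cases "a \<le> b") auto
  qed
  then have "totient m = card ((\<lambda>b. z ^ b) ` totatives m)"
    by (simp add: totient_def card_image)
  also have "\<dots> \<le> card {w::complex. w ^ m = 1 \<and> ipoly A w \<noteq> 0}"
  proof (rule card_mono)
    show "finite {w::complex. w ^ m = 1 \<and> ipoly A w \<noteq> 0}"
      using finite_nth_roots[OF m(1), of 1] by (rule finite_subset[rotated]) auto
    have "(z ^ b) ^ m = 1" for b
      using m(2) by (metis mult.commute power_mult power_one)
    then show "(\<lambda>b. z ^ b) ` totatives m \<subseteq> {w. w ^ m = 1 \<and> ipoly A w \<noteq> 0}"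
      using assms ipoly_root_power_coprime_iff[OF z] by (auto simp: totatives_def coprime_commute)
  qed
  finally show ?thesis .
qed

lemma nonvanishing_root_of_unity_power_eq_1:
  fixes z :: complex
  assumes z: "z ^ p = 1" "0 < p" "ipoly A z \<noteq> 0"
    and few: "card {w::complex. w ^ p = 1 \<and> ipoly A w \<noteq> 0} \<le> e"
    and k: "\<And>m. 0 < m \<Longrightarrow> totient m \<le> e \<Longrightarrow> m dvd k"
  shows "z ^ k = 1"
proof -
  obtain m where m: "primitive_root_of_unity z m"
    using primitive_root_of_unity_exists[OF z(1,2)] .
  then have "m dvd p" "0 < m" using z(1) by (auto simp: primitive_root_of_unity_def)
  have "totient m \<le> card {w::complex. w ^ m = 1 \<and> ipoly A w \<noteq> 0}"
    by (rule totient_le_card_nonroots[OF m z(3)])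
  also have "\<dots> \<le> card {w::complex. w ^ p = 1 \<and> ipoly A w \<noteq> 0}"
    using \<open>m dvd p\<close> finite_nth_roots[OF z(2), of 1]
    by (intro card_mono) (auto elim!: dvdE simp: power_mult intro: finite_subset[rotated])
  finally have "m dvd k" using few k \<open>0 < m\<close> by simp
  then show ?thesis using m by (simp add: primitive_root_of_unity_def)
qed

section \<open>Periodic solutions of linear recurrences\<close>

lemma sum_lessThan_periodic_shift:
  fixes f :: "nat \<Rightarrow> 'a::comm_monoid_add"
  assumes per: "\<And>i. f (i + p) = f i"
  shows "(\<Sum>i<p. f (i + j)) = (\<Sum>i<p. f i)"
proof (induction j)
  case 0
  show ?case by simp
next
  case (Suc j)
  show ?case
  proof (cases p)
    case 0
    then show ?thesis by simp
  next
    case (Suc q)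
    have "(\<Sum>i<p. f (i + Suc j)) = (\<Sum>i<q. f (Suc i + j)) + f (p + j)"
      by (simp add: Suc)
    also have "f (p + j) = f j"
      using per[of j] by (simp add: add.commute)
    also have "(\<Sum>i<q. f (Suc i + j)) + f j = (\<Sum>i<p. f (i + j))"
      unfolding Suc sum.lessThan_Suc_shift by (simp add: add.commute)
    finally show ?thesis using Suc.IH by simp
  qed
qed

lemma periodic_mod:
  fixes x :: "nat \<Rightarrow> 'a"
  assumes per: "\<And>t. x (t + p) = x t"
  shows "x (t mod p) = x t"
proof -
  have "x (t mod p + p * q) = x (t mod p)" for q :: nat
  proof (induction q)
    case (Suc q)
    have "t mod p + p * Suc q = (t mod p + p * q) + p" by simp
    then show ?case using per Suc.IH by metis
  qed simp
  then show ?thesis by (metis mod_mult_div_eq)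
qed

lemma poly_eq_0_if_vanishes_at_roots_of_unity:
  fixes Q :: "complex poly"
  assumes "degree Q < p" and "\<And>z. z ^ p = 1 \<Longrightarrow> poly Q z = 0"
  shows "Q = 0"
proof (rule ccontr)
  assume "Q \<noteq> 0"
  have "0 < p" using assms(1) by simp
  have "p = card {z::complex. z ^ p = 1}"
    using card_roots_unity_eq[OF \<open>0 < p\<close>] by simp
  also have "\<dots> \<le> card {z. poly Q z = 0}"
    using assms(2) by (intro card_mono poly_roots_finite[OF \<open>Q \<noteq> 0\<close>]) auto
  also have "\<dots> \<le> degree Q"
    by (rule card_poly_roots_bound[OF \<open>Q \<noteq> 0\<close>])
  finally show False using assms(1) by simp
qed

lemma root_of_unity_shift_sum:
  fixes x :: "nat \<Rightarrow> int" and z :: complex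
  assumes per: "\<And>t. x (t + p) = x t" and z: "z ^ p = 1"
  shows "z ^ j * (\<Sum>i<p. of_int (x (i + j)) * z ^ i) = (\<Sum>i<p. of_int (x i) * z ^ i)"
proof -
  have "z ^ j * (\<Sum>i<p. of_int (x (i + j)) * z ^ i) = (\<Sum>i<p. of_int (x (i + j)) * z ^ (i + j))"
    by (simp add: sum_distrib_left power_add algebra_simps)
  also have "\<dots> = (\<Sum>i<p. of_int (x i) * z ^ i)"
    using per z by (intro sum_lessThan_periodic_shift) (simp add: power_add)
  finally show ?thesis .
qed

lemma periodic_shift_eq_if_sums_eq:
  fixes x :: "nat \<Rightarrow> int"
  assumes p: "0 < p" and per: "\<And>t. x (t + p) = x t"
    and sums: "\<And>z::complex. z ^ p = 1 \<Longrightarrow>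
      (\<Sum>i<p. of_int (x (i + k)) * z ^ i) = (\<Sum>i<p. of_int (x i) * z ^ i)"
  shows "x (t + k) = x t"
proof -
  define D :: "complex poly" where "D = (\<Sum>i<p. monom (of_int (x (i + k) - x i)) i)"
  have "D = 0"
  proof (rule poly_eq_0_if_vanishes_at_roots_of_unity)
    show "degree D < p"
      using p by (intro le_less_trans[OF degree_le[of "p - 1"]]) (auto simp: D_def coeff_sum)
    show "poly D z = 0" if "z ^ p = 1" for z
      using sums[OF that] by (simp add: D_def poly_sum poly_monom sum_subtractf algebra_simps)
  qed
  have "x (i + k) = x i" if "i < p" for i
  proof -
    have "coeff D i = of_int (x (i + k) - x i)"
      using that by (simp add: D_def coeff_sum)
    then show ?thesis using \<open>D = 0\<close> by simp
  qed
  then have "x (t mod p + k) = x (t mod p)"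
    using p by simp
  then show ?thesis
    by (metis periodic_mod[of x p, OF per] mod_add_left_eq)
qed

lemma recurrence_annihilates_at_roots_of_unity:
  fixes x :: "nat \<Rightarrow> int" and c :: "nat \<Rightarrow> complex" and z :: complex
  assumes per: "\<And>t. x (t + p) = x t" and z: "z ^ p = 1"
    and rec: "\<And>t. (\<Sum>r\<le>e. c r * of_int (x (t + e - r))) = 0"
  shows "(\<Sum>r\<le>e. c r * z ^ r) * (\<Sum>i<p. of_int (x i) * z ^ i) = 0"
proof -
  have "(\<Sum>r\<le>e. c r * z ^ r) * (\<Sum>i<p. of_int (x i) * z ^ i)
      = (\<Sum>r\<le>e. c r * z ^ r * (z ^ (e - r) * (\<Sum>i<p. of_int (x (i + (e - r))) * z ^ i)))"
    unfolding sum_distrib_right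
    by (rule sum.cong[OF refl]) (simp only: root_of_unity_shift_sum[of x p z, OF per z])
  also have "\<dots> = z ^ e * (\<Sum>r\<le>e. \<Sum>i<p. c r * of_int (x (i + e - r)) * z ^ i)"
    by (auto simp: sum_distrib_left mult_ac simp flip: power_add intro!: sum.cong)
  also have "\<dots> = z ^ e * (\<Sum>i<p. z ^ i * (\<Sum>r\<le>e. c r * of_int (x (i + e - r))))"
    by (subst sum.swap) (simp add: sum_distrib_left mult_ac)
  finally show ?thesis using rec by simp
qed

lemma periodic_recurrent_sequence_period:
  fixes x :: "nat \<Rightarrow> int" and c :: "nat \<Rightarrow> complex"
  assumes p: "0 < p" and per: "\<And>t. x (t + p) = x t" and ce: "c e \<noteq> 0"
    and rec: "\<And>t. (\<Sum>r\<le>e. c r * of_int (x (t + e - r))) = 0"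
    and k: "\<And>m. 0 < m \<Longrightarrow> totient m \<le> e \<Longrightarrow> m dvd k"
  shows "x (t + k) = x t"
proof -
  define A :: "int poly" where "A = (\<Sum>i<p. monom (x i) i)"
  have A_eq: "ipoly A z = (\<Sum>i<p. of_int (x i) * z ^ i)" for z :: complex
    by (simp add: A_def ipoly_sum)
  define C :: "complex poly" where "C = (\<Sum>r\<le>e. monom (c r) r)"
  have "coeff C e = c e" by (simp add: C_def coeff_sum)
  then have "C \<noteq> 0" using ce by auto
  have "degree C \<le> e"
    by (rule degree_le) (auto simp: C_def coeff_sum)
  have C_root: "poly C z = 0" if "z ^ p = 1" "ipoly A z \<noteq> 0" for z :: complex
    using recurrence_annihilates_at_roots_of_unity[OF per that(1) rec] that(2)
    by (simp add: C_def A_eq poly_sum poly_monom)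
  have "card {w::complex. w ^ p = 1 \<and> ipoly A w \<noteq> 0} \<le> card {w. poly C w = 0}"
    using C_root by (intro card_mono poly_roots_finite[OF \<open>C \<noteq> 0\<close>]) auto
  also have "\<dots> \<le> e"
    using card_poly_roots_bound[OF \<open>C \<noteq> 0\<close>] \<open>degree C \<le> e\<close> by linarith
  finally have period: "z ^ k = 1" if "z ^ p = 1" "ipoly A z \<noteq> 0" for z :: complex
    by (rule nonvanishing_root_of_unity_power_eq_1[OF that(1) p that(2) _ k])
  show ?thesis
  proof (rule periodic_shift_eq_if_sums_eq[of p x, OF p per])
    fix z :: complex assume z: "z ^ p = 1"
    have "z \<noteq> 0" using z p by (cases "z = 0") (auto simp: power_0_left)
    have "z ^ k * (\<Sum>i<p. of_int (x (i + k)) * z ^ i) = ipoly A z"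
      using root_of_unity_shift_sum[of x p z, OF per z] by (simp add: A_eq)
    then show "(\<Sum>i<p. of_int (x (i + k)) * z ^ i) = (\<Sum>i<p. of_int (x i) * z ^ i)"
      using period[OF z] \<open>z \<noteq> 0\<close> by (cases "ipoly A z = 0") (auto simp: A_eq)
  qed
qed

section \<open>Recurrences on an interval\<close>

lemma recurrence_propagates_window:
  fixes y :: "nat \<Rightarrow> int" and c :: "nat \<Rightarrow> complex"
  assumes c0: "c 0 \<noteq> 0"
    and rec: "\<And>t. L \<le> t \<Longrightarrow> t + e \<le> M \<Longrightarrow> (\<Sum>r\<le>e. c r * of_int (y (t + e - r))) = 0"
    and window: "\<And>i. i < e \<Longrightarrow> y (a + q + i) = y (a + i)" and "L \<le> a"
  shows "a \<le> i \<Longrightarrow> i + q \<le> M \<Longrightarrow> y (i + q) = y i"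
proof (induction i rule: less_induct)
  case (less i)
  show ?case
  proof (cases "i < a + e")
    case True
    then show ?thesis using window[of "i - a"] less.prems by (simp add: add.commute)
  next
    case False
    have split: "(\<Sum>r\<le>e. g r) = g 0 + (\<Sum>r\<in>{1..e}. g r)" for g :: "nat \<Rightarrow> complex"
    proof -
      have "{..e} = insert 0 {1..e}" by auto
      then show ?thesis by simp
    qed
    have lower: "y (n - r) = y (i - r)" if "n = i \<or> n = i + q" "r \<in> {1..e}" for n r
      using that less.IH[of "i - r"] False less.prems by (auto simp: add.commute diff_add_eq[symmetric])
    have "c 0 * of_int (y n) = - (\<Sum>r\<in>{1..e}. c r * of_int (y (i - r)))" if "n = i \<or> n = i + q" for n
    proof -
      have "(\<Sum>r\<le>e. c r * of_int (y (n - e + e - r))) = 0"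
        using that False less.prems \<open>L \<le> a\<close> by (intro rec) auto
      moreover have "n - e + e = n" using that False by auto
      ultimately have "c 0 * of_int (y n) + (\<Sum>r\<in>{1..e}. c r * of_int (y (n - r))) = 0"
        by (simp add: split)
      moreover have "(\<Sum>r\<in>{1..e}. c r * of_int (y (n - r))) = (\<Sum>r\<in>{1..e}. c r * of_int (y (i - r)))"
        using lower[OF that] by simp
      ultimately show ?thesis by (simp add: eq_neg_iff_add_eq_0)
    qed
    then have "c 0 * of_int (y (i + q)) = c 0 * of_int (y i)" by simp
    then show ?thesis using c0 by simp
  qed
qed

lemma periodic_on_interval_mod:
  fixes y :: "nat \<Rightarrow> 'a" and a q r M :: nat
  assumes "0 < q" and per: "\<And>i. a \<le> i \<Longrightarrow> i + q \<le> M \<Longrightarrow> y (i + q) = y i"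
  shows "a + r \<le> M \<Longrightarrow> y (a + r mod q) = y (a + r)"
proof (induction r rule: less_induct)
  case (less r)
  show ?case
  proof (cases "r < q")
    case False
    then have "y (a + r mod q) = y (a + (r - q))"
      using less.IH[of "r - q"] less.prems \<open>0 < q\<close> by (simp add: le_mod_geq)
    also have "\<dots> = y (a + r)"
      using per[of "a + (r - q)"] False less.prems by simp
    finally show ?thesis .
  qed simp
qed

lemma recurrence_periodic_on_interval:
  fixes y :: "nat \<Rightarrow> int" and c :: "nat \<Rightarrow> complex"
  assumes ce: "c e \<noteq> 0" and "0 < q"
    and rec: "\<And>t. L \<le> t \<Longrightarrow> t + e \<le> M \<Longrightarrow> (\<Sum>r\<le>e. c r * of_int (y (t + e - r))) = 0"
    and per: "\<And>i. a \<le> i \<Longrightarrow> i + q \<le> M \<Longrightarrow> y (i + q) = y i"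
    and "L \<le> a" and "a + q + e \<le> M + 1"
    and k: "\<And>m. 0 < m \<Longrightarrow> totient m \<le> e \<Longrightarrow> m dvd k"
    and "a \<le> i" and "i + k \<le> M"
  shows "y (i + k) = y i"
proof -
  have per_mod: "y (a + r mod q) = y (a + r)" if "a + r \<le> M" for r
    using \<open>0 < q\<close> per that by (rule periodic_on_interval_mod)
  define x where "x t = y (a + t mod q)" for t
  have per_x: "x (t + q) = x t" for t
    by (simp add: x_def)
  have rec_x: "(\<Sum>r\<le>e. c r * of_int (x (t + e - r))) = 0" for t
  proof -
    have "x (t + e - r) = y (a + t mod q + e - r)" if "r \<le> e" for r
    proof -
      have "t mod q < q" using \<open>0 < q\<close> by simp
      then have "a + (t mod q + (e - r)) \<le> M" using \<open>a + q + e \<le> M + 1\<close> by linarith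
      then have "y (a + (t mod q + (e - r)) mod q) = y (a + (t mod q + (e - r)))"
        by (rule per_mod)
      moreover have "(t mod q + (e - r)) mod q = (t + (e - r)) mod q"
        by (rule mod_add_left_eq)
      ultimately show ?thesis using that by (simp add: x_def add.assoc)
    qed
    then have "(\<Sum>r\<le>e. c r * of_int (x (t + e - r))) = (\<Sum>r\<le>e. c r * of_int (y (a + t mod q + e - r)))"
      by simp
    also have "\<dots> = 0"
    proof (rule rec)
      show "L \<le> a + t mod q" using \<open>L \<le> a\<close> by simp
      have "t mod q < q" using \<open>0 < q\<close> by simp
      then show "a + t mod q + e \<le> M" using \<open>a + q + e \<le> M + 1\<close> by linarith
    qed
    finally show ?thesis .
  qed
  have x_period: "x (t + k) = x t" for t
    by (rule periodic_recurrent_sequence_period[of q x c e k, OF \<open>0 < q\<close> per_x ce rec_x k])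
  have y_x: "y j = x (j - a)" if "a \<le> j" "j \<le> M" for j
    using per_mod[of "j - a"] that by (simp add: x_def)
  have "i + k - a = (i - a) + k" using \<open>a \<le> i\<close> by simp
  then show ?thesis
    using y_x[of "i + k"] y_x[of i] x_period[of "i - a"] \<open>a \<le> i\<close> \<open>i + k \<le> M\<close> by simp
qed

lemma pigeonhole_equal_windows:
  fixes y :: "nat \<Rightarrow> 'a"
  assumes "finite S" and S: "\<And>i. L \<le> i \<Longrightarrow> i < L + card S ^ e + e \<Longrightarrow> y i \<in> S"
  obtains a q where "L \<le> a" and "0 < q" and "a + q \<le> L + card S ^ e"
    and "\<And>i. i < e \<Longrightarrow> y (a + q + i) = y (a + i)"
proof -
  define D where "D = {L..L + card S ^ e}"
  define g where "g a = map y [a..<a + e]" for a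
  have "g ` D \<subseteq> {xs. set xs \<subseteq> S \<and> length xs = e}"
    using S by (auto simp: g_def D_def)
  then have "card (g ` D) \<le> card S ^ e"
    using card_mono[OF finite_lists_length_eq[OF \<open>finite S\<close>]] card_lists_length_eq[OF \<open>finite S\<close>]
    by metis
  then have "\<not> inj_on g D"
    using card_image by (fastforce simp: D_def)
  then obtain a1 a2 where a: "a1 \<in> D" "a2 \<in> D" "a1 < a2" "g a1 = g a2"
    unfolding inj_on_def by (metis linorder_neqE_nat)
  show ?thesis
  proof (rule that[of a1 "a2 - a1"])
    show "L \<le> a1" "0 < a2 - a1" "a1 + (a2 - a1) \<le> L + card S ^ e"
      using a(1-3) by (simp_all add: D_def)
    fix i assume "i < e"
    have "g a1 ! i = g a2 ! i" using a(4) by simp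
    then show "y (a1 + (a2 - a1) + i) = y (a1 + i)" using \<open>i < e\<close> a(3) by (simp add: g_def)
  qed
qed

lemma recurrence_window_period:
  fixes y :: "nat \<Rightarrow> int" and c :: "nat \<Rightarrow> complex"
  assumes "finite S" and S: "\<And>i. L \<le> i \<Longrightarrow> i \<le> M \<Longrightarrow> y i \<in> S"
    and c0: "c 0 \<noteq> 0" and ce: "c e \<noteq> 0"
    and rec: "\<And>t. L \<le> t \<Longrightarrow> t + e \<le> M \<Longrightarrow> (\<Sum>r\<le>e. c r * of_int (y (t + e - r))) = 0"
    and k: "\<And>m. 0 < m \<Longrightarrow> totient m \<le> e \<Longrightarrow> m dvd k"
    and M: "L + card S ^ e + e + k \<le> M"
  shows "y (M - k) = y M"
proof -
  obtain a q where a: "L \<le> a" "0 < q" "a + q \<le> L + card S ^ e"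
    and window: "\<And>i. i < e \<Longrightarrow> y (a + q + i) = y (a + i)"
  proof -
    have "y i \<in> S" if "L \<le> i" "i < L + card S ^ e + e" for i
      using S that M by simp
    then show ?thesis using that pigeonhole_equal_windows[OF \<open>finite S\<close>] by blast
  qed
  have "y (i + q) = y i" if "a \<le> i" "i + q \<le> M" for i
    using recurrence_propagates_window[OF c0 rec window \<open>L \<le> a\<close> that] .
  then have "y (M - k + k) = y (M - k)"
    using a M by (intro recurrence_periodic_on_interval[OF ce \<open>0 < q\<close> rec _ \<open>L \<le> a\<close> _ k]) auto
  then show ?thesis using M by simp
qed

section \<open>Divisors of \<open>d\<^sub>v\<close>\<close>

lemma dvd_dlcm_if_totient_le:
  assumes "0 < m" and "2 * totient m \<le> v"
  shows "m dvd dlcm v"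
proof (rule multiplicity_le_imp_dvd)
  show "m \<noteq> 0" using assms(1) by simp
  have L: "Lcm {1..v} \<noteq> 0" by (subst Lcm_0_iff) auto
  fix q :: nat assume q: "prime q"
  define a where "a = multiplicity q m"
  show "multiplicity q m \<le> multiplicity q (dlcm v)"
  proof (cases "a = 0")
    case False
    have "q ^ a \<le> 2 * (q ^ (a - 1) * (q - 1))"
    proof -
      have "q ^ a = q ^ (a - 1) * q" using False by (simp flip: power_Suc2)
      also have "\<dots> \<le> q ^ (a - 1) * (2 * (q - 1))"
        using prime_ge_2_nat[OF q] by (intro mult_left_mono) auto
      finally show ?thesis by simp
    qed
    also have "q ^ (a - 1) * (q - 1) = totient (q ^ a)"
      using totient_prime_power[OF q] False by simp
    also have "totient (q ^ a) \<le> totient m"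
      by (rule totient_dvd_mono[OF _ assms(1)]) (simp add: a_def multiplicity_dvd)
    finally have "q ^ a \<le> v" using assms(2) by linarith
    moreover have "0 < q ^ a" using prime_gt_0_nat[OF q] by simp
    ultimately have "q ^ a dvd dlcm v"
      unfolding dlcm_def by (intro dvd_Lcm) auto
    then show ?thesis
      using power_dvd_iff_le_multiplicity[of "dlcm v" q a] L prime_gt_1_nat[OF q]
      by (simp add: a_def dlcm_def)
  qed (simp add: a_def)
qed

lemma two_mul_le_floor_16_mul_ln_ln:
  "2 * u \<le> nat \<lfloor>16 * real u * ln (ln (real u + 3))\<rfloor>"
proof (cases "u = 0")
  case False
  have "exp (1/8) \<le> (4/3 :: real)"
    using real_exp_bound_lemma[of "1/8"] by simp
  also have "(4/3 :: real) \<le> ln 4"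
    using ln2_ge_two_thirds ln_realpow[of 2 2] by simp
  also have "ln 4 \<le> ln (real u + 3)"
    using False by simp
  finally have "1/8 \<le> ln (ln (real u + 3))"
    using ln_ge_iff by (metis exp_gt_zero less_le_trans ln_exp ln_le_cancel_iff)
  then have "real u * (1/8) \<le> real u * ln (ln (real u + 3))"
    by (rule mult_left_mono) simp
  then show ?thesis
    by linarith
qed simp

section \<open>Nonzero coefficients of \<open>P (X ^ k - 1)\<close>\<close>

lemma coeff_mult_degree_le:
  assumes "degree R \<le> e" and "e \<le> n"
  shows "coeff (P * R) n = (\<Sum>r\<le>e. coeff R r * coeff P (n - r))"
proof -
  have "coeff (P * R) n = (\<Sum>r\<le>n. coeff R r * coeff P (n - r))"
    by (simp add: coeff_mult mult.commute[of P])
  also have "\<dots> = (\<Sum>r\<le>e. coeff R r * coeff P (n - r))"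
    using assms by (intro sum.mono_neutral_right) (auto simp: coeff_eq_0)
  finally show ?thesis .
qed

lemma coeff_mult_monom_minus_one:
  fixes P :: "'a::comm_ring_1 poly"
  shows "coeff (P * (monom 1 k - 1)) j = (if k \<le> j then coeff P (j - k) else 0) - coeff P j"
proof -
  have "P * (monom 1 k - 1) = monom 1 k * P - P" by (simp add: algebra_simps)
  then show ?thesis by (simp add: coeff_monom_mult)
qed

lemma NC_monom_mult:
  fixes F :: "'a::idom poly"
  assumes "c \<noteq> 0"
  shows "NC (monom c s * F) = NC F"
proof -
  have "{j. coeff (monom c s * F) j \<noteq> 0} = (\<lambda>j. j + s) ` {j. coeff F j \<noteq> 0}"
    using assms by (auto simp: coeff_monom_mult image_iff intro!: exI[of _ "_ - s"])
  then show ?thesis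
    by (simp add: NC_def card_image)
qed

lemma monom_mult_decomposition:
  fixes p :: "'a::idom poly"
  assumes "p \<noteq> 0"
  obtains s q where "p = monom 1 s * q" and "coeff q 0 \<noteq> 0"
proof -
  obtain q where "p = [:0, 1:] ^ order 0 p * q" and "\<not> [:0, 1:] dvd q"
    using order_decomp[OF assms, of 0] by auto
  moreover have "[:0, 1:] ^ order 0 p = monom 1 (order 0 p)"
    by (simp add: monom_altdef)
  moreover have "coeff q 0 \<noteq> 0"
    using \<open>\<not> [:0, 1:] dvd q\<close> by (simp add: dvd_iff_poly_eq_0 poly_0_coeff_0)
  ultimately show ?thesis using that by metis
qed

lemma coeff_periodic_if_mult_coeffs_vanish:
  fixes P R :: "complex poly" and S :: "int set"
  assumes "finite S" and S: "\<And>i. i \<le> N \<Longrightarrow> coeff P i \<in> of_int ` S" and "j \<le> N"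
    and R0: "coeff R 0 \<noteq> 0" and "R \<noteq> 0"
    and k: "\<And>m. 0 < m \<Longrightarrow> totient m \<le> degree R \<Longrightarrow> m dvd k"
    and j: "L + card S ^ degree R + degree R + k \<le> j"
    and vanish: "\<And>n. L + degree R \<le> n \<Longrightarrow> n \<le> j \<Longrightarrow> coeff (P * R) n = 0"
  shows "coeff P (j - k) = coeff P j"
proof -
  define d where "d = degree R"
  define y where "y i = (SOME z. z \<in> S \<and> of_int z = coeff P i)" for i
  have y: "y i \<in> S \<and> of_int (y i) = coeff P i" if i: "i \<le> N" for i
  proof -
    obtain z where "z \<in> S" "of_int z = coeff P i" using S[OF i] by auto
    then show ?thesis unfolding y_def by (rule someI[of _ z, OF conjI])
  qed
  have rec: "(\<Sum>r\<le>d. coeff R r * of_int (y (t + d - r))) = 0" if "L \<le> t" "t + d \<le> j" for t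
  proof -
    have "(\<Sum>r\<le>d. coeff R r * of_int (y (t + d - r))) = coeff (P * R) (t + d)"
      using y \<open>j \<le> N\<close> that by (simp add: coeff_mult_degree_le[of R d] d_def)
    also have "\<dots> = 0"
      using that by (intro vanish) (simp_all add: d_def)
    finally show ?thesis .
  qed
  have "y (j - k) = y j"
  proof (rule recurrence_window_period[where c = "coeff R" and e = d and L = L and M = j])
    show "y i \<in> S" if "L \<le> i" "i \<le> j" for i
      using y[of i] that \<open>j \<le> N\<close> by simp
    show "coeff R d \<noteq> 0" using \<open>R \<noteq> 0\<close> by (simp add: d_def)
  qed (use \<open>finite S\<close> R0 rec k j in \<open>simp_all add: d_def\<close>)
  then show ?thesis
    using y[of j] y[of "j - k"] \<open>j \<le> N\<close> by auto
qed

lemma coeff_mult_monom_minus_one_eq_0: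
  fixes P R :: "complex poly" and S :: "int set"
  assumes "finite S" and "degree P \<le> N" and S: "\<And>i. i \<le> N \<Longrightarrow> coeff P i \<in> of_int ` S"
    and P0: "coeff P 0 \<noteq> 0" and R0: "coeff R 0 \<noteq> 0"
    and k: "\<And>m. 0 < m \<Longrightarrow> totient m \<le> degree R \<Longrightarrow> m dvd k"
    and gap: "\<And>a. coeff (P * R) a \<noteq> 0 \<Longrightarrow>
      a + (k + card S ^ degree R + degree R) < j \<or> j + degree R < a"
  shows "coeff (P * (monom 1 k - 1)) j = 0"
proof -
  define B where "B = k + card S ^ degree R + degree R"
  have "P \<noteq> 0" "R \<noteq> 0" using P0 R0 by auto
  have "B < j" using gap[of 0] P0 R0 by (simp add: coeff_mult_0 B_def)
  have top: "coeff (P * R) (degree P + degree R) \<noteq> 0"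
    using \<open>P \<noteq> 0\<close> \<open>R \<noteq> 0\<close> by (simp add: coeff_mult_degree_sum)
  show ?thesis
  proof (cases "degree P + degree R + B < j")
    case True
    then have "coeff P j = 0" "coeff P (j - k) = 0"
      by (simp_all add: coeff_eq_0 B_def)
    then show ?thesis by (simp add: coeff_mult_monom_minus_one)
  next
    case False
    then have "j \<le> N" using gap[OF top] \<open>degree P \<le> N\<close> by (simp add: B_def)
    have "coeff P (j - k) = coeff P j"
    proof (rule coeff_periodic_if_mult_coeffs_vanish[OF \<open>finite S\<close> S \<open>j \<le> N\<close> R0 \<open>R \<noteq> 0\<close> k])
      show "j - B + card S ^ degree R + degree R + k \<le> j" using \<open>B < j\<close> by (simp add: B_def)
      show "coeff (P * R) n = 0" if "j - B + degree R \<le> n" "n \<le> j" for n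
        using gap[of n] that \<open>B < j\<close> unfolding B_def by linarith
    qed
    then show ?thesis using \<open>B < j\<close> by (simp add: coeff_mult_monom_minus_one B_def)
  qed
qed

lemma NC_mult_monom_minus_one_le_coeff_0:
  fixes P R :: "complex poly" and S :: "int set"
  assumes "finite S" and "degree P \<le> N" and "\<And>i. i \<le> N \<Longrightarrow> coeff P i \<in> of_int ` S"
    and "coeff P 0 \<noteq> 0" and "coeff R 0 \<noteq> 0"
    and "\<And>m. 0 < m \<Longrightarrow> totient m \<le> degree R \<Longrightarrow> m dvd k"
  shows "NC (P * (monom 1 k - 1)) \<le> NC (P * R) * (k + card S ^ degree R + 2 * degree R + 1)"
proof -
  define d where "d = degree R"
  define B where "B = k + card S ^ d + d"
  define J where "J = {a. coeff (P * R) a \<noteq> 0}"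
  have "finite J"
    unfolding J_def by (rule finite_subset[of _ "{..degree (P * R)}"]) (auto intro: le_degree)
  have "{j. coeff (P * (monom 1 k - 1)) j \<noteq> 0} \<subseteq> (\<Union>a\<in>J. {a - d..a + B})"
  proof
    fix j assume "j \<in> {j. coeff (P * (monom 1 k - 1)) j \<noteq> 0}"
    then have "\<not> (\<forall>a\<in>J. a + B < j \<or> j + d < a)"
      using coeff_mult_monom_minus_one_eq_0[OF assms] by (auto simp: J_def B_def d_def)
    then obtain a where "a \<in> J" "j + d \<ge> a" "j \<le> a + B" by auto
    then show "j \<in> (\<Union>a\<in>J. {a - d..a + B})"
      by (intro UN_I[of a]) auto
  qed
  then have "NC (P * (monom 1 k - 1)) \<le> card (\<Union>a\<in>J. {a - d..a + B})"
    unfolding NC_def using \<open>finite J\<close> by (intro card_mono) auto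
  also have "\<dots> \<le> (\<Sum>a\<in>J. card {a - d..a + B})"
    by (rule card_UN_le[OF \<open>finite J\<close>])
  also have "\<dots> \<le> (\<Sum>a\<in>J. B + d + 1)"
    by (intro sum_mono) simp
  also have "\<dots> = NC (P * R) * (k + card S ^ degree R + 2 * degree R + 1)"
    by (simp add: NC_def J_def B_def d_def)
  finally show ?thesis .
qed

lemma NC_mult_monom_minus_one_le:
  fixes P R :: "complex poly" and S :: "int set"
  assumes "finite S" and "degree P \<le> N" and S: "\<And>i. i \<le> N \<Longrightarrow> coeff P i \<in> of_int ` S"
    and "P \<noteq> 0" and "R \<noteq> 0"
    and k: "\<And>m. 0 < m \<Longrightarrow> totient m \<le> degree R \<Longrightarrow> m dvd k"
  shows "NC (P * (monom 1 k - 1)) \<le> NC (P * R) * (k + card S ^ degree R + 2 * degree R + 1)"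
proof -
  obtain r P0 where P: "P = monom 1 r * P0" and P0: "coeff P0 0 \<noteq> 0"
    using monom_mult_decomposition[OF \<open>P \<noteq> 0\<close>] .
  obtain s R0 where R: "R = monom 1 s * R0" and R0: "coeff R0 0 \<noteq> 0"
    using monom_mult_decomposition[OF \<open>R \<noteq> 0\<close>] .
  have "P0 \<noteq> 0" "R0 \<noteq> 0" using P0 R0 by auto
  then have deg: "degree P = r + degree P0" "degree R = s + degree R0"
    by (simp_all add: P R degree_mult_eq degree_monom_eq)
  have "0 < card S"
    using S[of 0] \<open>finite S\<close> by (auto simp: card_gt_0_iff)
  have "NC (P * (monom 1 k - 1)) = NC (P0 * (monom 1 k - 1))"
    by (simp add: P NC_monom_mult mult.assoc)
  also have "\<dots> \<le> NC (P0 * R0) * (k + card S ^ degree R0 + 2 * degree R0 + 1)"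
  proof (rule NC_mult_monom_minus_one_le_coeff_0[OF \<open>finite S\<close> _ _ P0 R0])
    show "degree P0 \<le> N - r" using deg \<open>degree P \<le> N\<close> by simp
    show "coeff P0 i \<in> of_int ` S" if "i \<le> N - r" for i
      using S[of "i + r"] that deg \<open>degree P \<le> N\<close> by (simp add: P coeff_monom_mult)
    show "m dvd k" if "0 < m" "totient m \<le> degree R0" for m
      using k that deg by simp
  qed
  also have "\<dots> \<le> NC (P * R) * (k + card S ^ degree R + 2 * degree R + 1)"
  proof -
    have "P * R = (monom 1 r * monom 1 s) * (P0 * R0)"
      by (simp add: P R ac_simps)
    then have "NC (P0 * R0) = NC (P * R)"
      by (simp add: mult_monom NC_monom_mult)
    then show ?thesis
      using power_increasing[of "degree R0" "degree R" "card S"] \<open>0 < card S\<close> deg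
      by (simp add: mult_le_mono2)
  qed
  finally show ?thesis .
qed

theorem lemma3p9:
  fixes S :: "int set" and n u \<nu> :: nat and P R :: "complex poly"
  assumes "finite S"
    and "P \<in> polys_coeffs_in (2*n) (of_int ` S)"
    and "degree R \<le> u" and "R \<noteq> 0"
    and "NC (P * R) \<le> \<nu>"
  shows "let v = nat \<lfloor>16 * real u * ln (ln (real u + 3))\<rfloor>; k = dlcm v;
             H = monom 1 k - 1 :: complex poly
         in NC (P * H) \<le> (\<nu> + 1) * (k + card S ^ (u + 1) + 3 * (u + 1) + 2)"
proof -
  define v where "v = nat \<lfloor>16 * real u * ln (ln (real u + 3))\<rfloor>"
  define k where "k = dlcm v"
  have coeffs: "degree P \<le> 2 * n" "\<And>i. i \<le> 2 * n \<Longrightarrow> coeff P i \<in> of_int ` S"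
    using assms(2) by (auto simp: polys_coeffs_in_def)
  have "1 \<le> card S"
    using coeffs(2)[of 0] \<open>finite S\<close> by (auto simp: Suc_le_eq card_gt_0_iff)
  have "NC (P * (monom 1 k - 1)) \<le> NC (P * R) * (k + card S ^ degree R + 2 * degree R + 1)"
  proof (cases "P = 0")
    case False
    have "m dvd k" if "0 < m" "totient m \<le> degree R" for m
      using two_mul_le_floor_16_mul_ln_ln[of u] that assms(3) unfolding k_def v_def
      by (intro dvd_dlcm_if_totient_le) auto
    then show ?thesis
      using NC_mult_monom_minus_one_le[OF \<open>finite S\<close> coeffs False \<open>R \<noteq> 0\<close>] by blast
  qed (simp add: NC_def)
  also have "\<dots> \<le> (\<nu> + 1) * (k + card S ^ (u + 1) + 3 * (u + 1) + 2)"
    using assms(3,5) power_increasing[of "degree R" "u + 1" "card S"] \<open>1 \<le> card S\<close>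
    by (intro mult_le_mono) auto
  finally show ?thesis
    by (simp add: Let_def k_def v_def)
qed

end
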